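(* Let $(\mathbb{X},\mathcal{X},\mu,T)$ be a non-atomic probability space with $T$ invertible, measure-preserving and ergodic, and let $(l(n))_{n\ge1}$ be an increasing sequence of positive integers. Then there exists a measurable function $v:\mathbb{X}\to[0,\infty)$ (finite a.e.) such that $\limsup_n \frac{1}{l(n)}\,v\circ T^n=+\infty$ $\mu$-a.e. *)

theory Defs
  imports "HOL-Probability.Probability"
begin

definition measure_preserving_map :: "'a measure \<Rightarrow> ('a \<Rightarrow> 'a) \<Rightarrow> bool" where
  "measure_preserving_map M T \<longleftrightarrow> T \<in> measurable M M \<and> distr M M T = M"

definition invertible_mp_map :: "'a measure \<Rightarrow> ('a \<Rightarrow> 'a) \<Rightarrow> bool" where
  "invertible_mp_map M T \<longleftrightarrow> measure_preserving_map M T \<and> bij_betw T (space M) (space M)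
     \<and> measure_preserving_map M (inv_into (space M) T)"

definition ergodic_map :: "'a measure \<Rightarrow> ('a \<Rightarrow> 'a) \<Rightarrow> bool" where
  "ergodic_map M T \<longleftrightarrow> (\<forall>A\<in>sets M. T -` A \<inter> space M = A \<longrightarrow> measure M A = 0 \<or> measure M A = 1)"

definition non_atomic :: "'a measure \<Rightarrow> bool" where
  "non_atomic M \<longleftrightarrow> (\<forall>A\<in>sets M. measure M A > 0 \<longrightarrow>
     (\<exists>B\<in>sets M. B \<subseteq> A \<and> 0 < measure M B \<and> measure M B < measure M A))"

end

theory Submission
  imports Defs
begin

text \<open>
  Split the space into infinitely many disjoint sets \<open>S k\<close> of positive measure (non-atomicity).
  By ergodicity almost every orbit enters each \<open>S k\<close> at arbitrarily late times, so one can choose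
  a window \<open>{k..W k}\<close> in which the orbit enters \<open>S k\<close> with probability \<open>> 1 - 1/(k+1)\<close>.
  Put \<open>v = k * l (W k)\<close> on \<open>S k\<close>. Since the window probabilities tend to 1, almost every orbit
  enters \<open>S k\<close> inside its window for infinitely many \<open>k\<close>, at a time \<open>n \<le> W k\<close> where
  \<open>v (T^n x) / l n \<ge> k\<close> by monotonicity of \<open>l\<close>.
\<close>

lemma suminf_mult_indicator:
  fixes c :: "nat \<Rightarrow> 'b::{t2_space, semiring_1}"
  assumes "disjoint_family S" "x \<in> S k"
  shows "(\<Sum>i. c i * indicator (S i) x) = c k"
proof -
  have "(\<lambda>i. c i * indicator (S i) x) = (\<lambda>i. if i = k then c i else 0)"
    using assms unfolding disjoint_family_on_def indicator_def by fastforce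
  then show ?thesis
    using sums_single[of k c] sums_unique by metis
qed

lemma weighted_indicator_sum_nonneg:
  fixes c :: "nat \<Rightarrow> real"
  assumes "disjoint_family S" "\<And>k. 0 \<le> c k"
  shows "0 \<le> (\<Sum>k. c k * indicator (S k) x)"
proof (cases "\<exists>k. x \<in> S k")
  case True
  then obtain k where "x \<in> S k" ..
  show ?thesis
    unfolding suminf_mult_indicator[OF assms(1) \<open>x \<in> S k\<close>] by (rule assms(2))
qed simp

lemma limsup_eq_infinity_if_frequently_ge:
  assumes "\<And>r. \<exists>\<^sub>F n in sequentially. r \<le> f n"
  shows "limsup (\<lambda>n. ereal (f n)) = \<infinity>"
proof -
  have "(SUP n\<in>{N..}. ereal (f n)) = \<infinity>" for N
  proof (rule SUP_PInfty)
    fix r :: nat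
    obtain n where "n \<ge> N" "real r \<le> f n"
      using assms[of "real r"] unfolding frequently_sequentially by blast
    then show "\<exists>n\<in>{N..}. ereal (real r) \<le> ereal (f n)" by auto
  qed
  then show ?thesis
    unfolding limsup_INF_SUP by simp
qed

lemma finite_measure_incseq_gt:
  assumes "finite_measure M" "range G \<subseteq> sets M" "incseq G" "c < measure M (\<Union>W. G W)"
  shows "\<exists>W. c < measure M (G W)"
proof -
  interpret finite_measure M by fact
  have "(\<lambda>W. measure M (G W)) \<longlonglongrightarrow> measure M (\<Union>W. G W)"
    using assms(2,3) by (rule finite_Lim_measure_incseq)
  from order_tendstoD(1)[OF this assms(4)] show ?thesis
    by (auto simp: eventually_sequentially)
qed

lemma AE_frequently_if_prob_tendsto_1:
  assumes "prob_space M" "range G \<subseteq> sets M" "(\<lambda>k. measure M (G k)) \<longlonglongrightarrow> 1"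
  shows "AE x in M. \<exists>\<^sub>F k in sequentially. x \<in> G k"
proof -
  interpret prob_space M by fact
  have "AE x in M. x \<in> (\<Union>k\<in>{K..}. G k)" for K
  proof (rule AE_prob_1)
    have tail_sets: "(\<Union>k\<in>{K..}. G k) \<in> sets M"
      using assms(2) by auto
    have "measure M (G k) \<le> measure M (\<Union>k\<in>{K..}. G k)" if "k \<ge> K" for k
      using that tail_sets by (intro finite_measure_mono) auto
    then have "1 \<le> measure M (\<Union>k\<in>{K..}. G k)"
      using assms(3) by (intro LIMSEQ_le_const2) auto
    then show "measure M (\<Union>k\<in>{K..}. G k) = 1"
      using prob_le_1 by (intro antisym)
  qed
  then have "AE x in M. \<forall>K. x \<in> (\<Union>k\<in>{K..}. G k)"
    by (simp add: AE_all_countable)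
  then show ?thesis
    by eventually_elim (auto simp: frequently_sequentially)
qed

lemma non_atomic_disjoint_family:
  assumes "finite_measure M" "non_atomic M" "0 < measure M (space M)"
  shows "\<exists>S :: nat \<Rightarrow> 'a set. disjoint_family S \<and> (\<forall>k. S k \<in> sets M \<and> 0 < measure M (S k))"
proof -
  interpret finite_measure M by fact
  obtain piece where piece: "\<And>A. A \<in> sets M \<Longrightarrow> 0 < measure M A \<Longrightarrow>
      piece A \<in> sets M \<and> piece A \<subseteq> A \<and> 0 < measure M (piece A) \<and> measure M (piece A) < measure M A"
  proof -
    have "\<forall>A. \<exists>B. A \<in> sets M \<and> 0 < measure M A \<longrightarrow>
        B \<in> sets M \<and> B \<subseteq> A \<and> 0 < measure M B \<and> measure M B < measure M A"
      using assms(2) unfolding non_atomic_def by blast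
    then obtain f where "\<forall>A. A \<in> sets M \<and> 0 < measure M A \<longrightarrow>
        f A \<in> sets M \<and> f A \<subseteq> A \<and> 0 < measure M (f A) \<and> measure M (f A) < measure M A"
      by (metis choice)
    then show ?thesis by (intro that) blast
  qed
  define C where "C = rec_nat (space M) (\<lambda>_ A. A - piece A)"
  have C_Suc: "C (Suc n) = C n - piece (C n)" for n
    by (simp add: C_def)
  have C: "C n \<in> sets M \<and> 0 < measure M (C n)" for n
  proof (induction n)
    case 0
    then show ?case using assms(3) by (simp add: C_def)
  next
    case (Suc n)
    then have "measure M (C (Suc n)) = measure M (C n) - measure M (piece (C n))"
      using piece by (simp add: C_Suc finite_measure_Diff)
    then show ?case using piece Suc by (auto simp: C_Suc)
  qed
  have C_antimono: "C n \<subseteq> C m" if "m \<le> n" for m n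
    using that by (induction n rule: dec_induct) (auto simp: C_Suc)
  have S: "piece (C k) \<in> sets M" "0 < measure M (piece (C k))" "piece (C k) \<subseteq> C k" for k
    using piece[of "C k"] C[of k] by simp_all
  have "piece (C i) \<inter> piece (C j) = {}" if "i < j" for i j
  proof -
    have "piece (C j) \<subseteq> C (Suc i)"
      using S(3)[of j] C_antimono[of "Suc i" j] that by simp
    then show ?thesis by (auto simp: C_Suc)
  qed
  then have "disjoint_family (\<lambda>k. piece (C k))"
    unfolding disjoint_family_on_def by (metis Int_commute linorder_neq_iff)
  with S(1,2) show ?thesis by (intro exI[of _ "\<lambda>k. piece (C k)"]) simp
qed

lemma measure_preserving_map_measure_vimage:
  assumes "measure_preserving_map M T" "A \<in> sets M"
  shows "measure M (T -` A \<inter> space M) = measure M A"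
  using assms measure_distr[of T M M A] unfolding measure_preserving_map_def by simp

lemma hitting_set_sets:
  fixes I :: "nat set"
  assumes "T \<in> measurable M M" "S \<in> sets M"
  shows "{x\<in>space M. \<exists>n\<in>I. (T^^n) x \<in> S} \<in> sets M"
proof -
  have "{x\<in>space M. \<exists>n\<in>I. (T^^n) x \<in> S} = (\<Union>n\<in>I. (T^^n) -` S \<inter> space M)"
    by auto
  then show ?thesis
    using assms by (auto intro: measurable_sets measurable_compose_n)
qed

lemma vimage_eventual_hitting_set:
  assumes "T \<in> measurable M M"
  shows "T -` {x\<in>space M. \<exists>n\<ge>N. (T^^n) x \<in> S} \<inter> space M = {x\<in>space M. \<exists>n\<ge>Suc N. (T^^n) x \<in> S}"
proof -
  have "(T^^n) (T x) = (T^^Suc n) x" for n x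
    by (simp add: funpow_Suc_right del: funpow.simps)
  then have "(\<exists>n\<ge>N. (T^^n) (T x) \<in> S) \<longleftrightarrow> (\<exists>n\<ge>Suc N. (T^^n) x \<in> S)" for x
    by (metis Suc_le_D Suc_le_mono)
  then show ?thesis using measurable_space[OF assms] by blast
qed

lemma ergodic_recurrence:
  assumes "prob_space M" "measure_preserving_map M T" "ergodic_map M T"
    and S: "S \<in> sets M" "0 < measure M S"
  shows "measure M {x\<in>space M. \<exists>n\<ge>N. (T^^n) x \<in> S} = 1"
proof -
  interpret prob_space M by fact
  have T: "T \<in> measurable M M"
    using assms(2) unfolding measure_preserving_map_def by simp
  define F where "F N = {x\<in>space M. \<exists>n\<ge>N. (T^^n) x \<in> S}" for N
  have F_sets: "F N \<in> sets M" for N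
    using hitting_set_sets[OF T S(1), of "{N..}"] unfolding F_def Bex_def atLeast_iff .
  have F_vimage: "T -` F N \<inter> space M = F (Suc N)" for N
    unfolding F_def by (rule vimage_eventual_hitting_set[OF T])
  have F_measure: "measure M (F N) = measure M (F 0)" for N
    by (induction N) (use measure_preserving_map_measure_vimage[OF assms(2) F_sets] F_vimage in auto)
  have F_dec: "decseq F"
    unfolding decseq_def F_def by (auto intro: order_trans)
  text \<open>All \<open>F N\<close> have the same measure, and their intersection is strictly invariant,
    so ergodicity applies to it.\<close>
  define L where "L = (\<Inter>N. F N)"
  have "(\<lambda>N. measure M (F N)) \<longlonglongrightarrow> measure M L"
    unfolding L_def using F_sets F_dec by (intro finite_Lim_measure_decseq) auto
  moreover have "(\<lambda>N. measure M (F N)) = (\<lambda>_. measure M (F 0))"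
    using F_measure by (rule ext)
  ultimately have L_measure: "measure M L = measure M (F 0)"
    by (simp add: LIMSEQ_const_iff)
  have "T -` L \<inter> space M = (\<Inter>N. F (Suc N))"
    using F_vimage unfolding L_def by blast
  also have "\<dots> = L"
    using F_dec unfolding L_def decseq_Suc_iff by blast
  finally have L_invariant: "T -` L \<inter> space M = L" .
  have "S \<subseteq> F 0"
    unfolding F_def using sets.sets_into_space[OF S(1)] by (auto intro: exI[of _ 0])
  then have "measure M S \<le> measure M (F 0)"
    using F_sets by (rule finite_measure_mono)
  then have "0 < measure M L"
    using S(2) L_measure by linarith
  moreover have "L \<in> sets M"
    unfolding L_def using F_sets by auto
  ultimately have "measure M L = 1"
    using assms(3) L_invariant unfolding ergodic_map_def by auto
  then show ?thesis
    using L_measure F_measure[of N] unfolding F_def by simp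
qed

lemma ergodic_hitting_window:
  assumes "prob_space M" "measure_preserving_map M T" "ergodic_map M T"
    and "S \<in> sets M" "0 < measure M S" "c < 1"
  shows "\<exists>W. c < measure M {x\<in>space M. \<exists>n\<in>{N..W}. (T^^n) x \<in> S}"
proof (rule finite_measure_incseq_gt)
  let ?G = "\<lambda>W. {x\<in>space M. \<exists>n\<in>{N..W}. (T^^n) x \<in> S}"
  show "finite_measure M"
    using assms(1) by (simp add: prob_space_def)
  have "T \<in> measurable M M"
    using assms(2) unfolding measure_preserving_map_def by simp
  then show "range ?G \<subseteq> sets M"
    using hitting_set_sets assms(4) by blast
  show "incseq ?G"
    unfolding incseq_def by fastforce
  have "(\<Union>W. ?G W) = {x\<in>space M. \<exists>n\<ge>N. (T^^n) x \<in> S}"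
    by auto (meson atLeastAtMost_iff order_refl)
  then show "c < measure M (\<Union>W. ?G W)"
    using ergodic_recurrence[OF assms(1-5)] assms(6) by simp
qed

lemma ergodic_AE_frequently_hits_windows:
  fixes S :: "nat \<Rightarrow> 'a set"
  assumes "prob_space M" "measure_preserving_map M T" "ergodic_map M T"
    and S: "\<And>k. S k \<in> sets M" "\<And>k. 0 < measure M (S k)"
  shows "\<exists>W. AE x in M. \<exists>\<^sub>F k in sequentially. \<exists>n\<in>{k..W k}. (T^^n) x \<in> S k"
proof -
  interpret prob_space M by fact
  define G where "G k W = {x\<in>space M. \<exists>n\<in>{k..W}. (T^^n) x \<in> S k}" for k W
  have "\<exists>W. 1 - inverse (real (Suc k)) < measure M (G k W)" for k
    unfolding G_def using ergodic_hitting_window[OF assms(1-3) S] by simp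
  then obtain W where W: "\<And>k. 1 - inverse (real (Suc k)) < measure M (G k (W k))"
    by metis
  have "T \<in> measurable M M"
    using assms(2) unfolding measure_preserving_map_def by simp
  then have G_sets: "range (\<lambda>k. G k (W k)) \<subseteq> sets M"
    unfolding G_def using hitting_set_sets S(1) by blast
  have lower_lim: "(\<lambda>k. 1 - inverse (real (Suc k))) \<longlonglongrightarrow> 1"
    using LIMSEQ_inverse_real_of_nat_add_minus[of 1] by simp
  have "(\<lambda>k. measure M (G k (W k))) \<longlonglongrightarrow> 1"
    by (rule tendsto_sandwich[OF _ _ lower_lim tendsto_const])
       (intro always_eventually allI less_imp_le W prob_le_1)+
  then have "AE x in M. \<exists>\<^sub>F k in sequentially. x \<in> G k (W k)"
    by (rule AE_frequently_if_prob_tendsto_1[OF assms(1) G_sets])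
  then have "AE x in M. \<exists>\<^sub>F k in sequentially. \<exists>n\<in>{k..W k}. (T^^n) x \<in> S k"
    by eventually_elim (auto elim: frequently_elim1 simp: G_def)
  then show ?thesis by blast
qed

lemma limsup_weighted_visits_eq_infinity:
  fixes l :: "nat \<Rightarrow> nat" and W :: "nat \<Rightarrow> nat" and y :: "nat \<Rightarrow> 'a"
  assumes l_mono: "strict_mono_on {1..} l" and l_pos: "\<forall>n\<ge>1. 0 < l n"
    and "disjoint_family S" and visits: "\<exists>\<^sub>F k in sequentially. \<exists>n\<in>{k..W k}. y n \<in> S k"
  shows "limsup (\<lambda>n. ereal ((\<Sum>k. real k * real (l (W k)) * indicator (S k) (y n)) / real (l n))) = \<infinity>"
proof (rule limsup_eq_infinity_if_frequently_ge)
  fix r :: real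
  show "\<exists>\<^sub>F n in sequentially. r \<le> (\<Sum>k. real k * real (l (W k)) * indicator (S k) (y n)) / real (l n)"
    unfolding frequently_sequentially
  proof
    fix N
    obtain k n where k: "k \<ge> max N (max 1 (nat \<lceil>r\<rceil>))" and n: "n \<in> {k..W k}" "y n \<in> S k"
      using visits unfolding frequently_sequentially by blast
    have "l n \<le> l (W k)"
      using n(1) k by (intro strict_mono_on_leD[OF l_mono]) auto
    moreover have "0 < l n"
      using l_pos n(1) k by auto
    ultimately have "real k \<le> real k * real (l (W k)) / real (l n)"
      by (simp add: pos_le_divide_eq mult_left_mono)
    moreover have "r \<le> real k"
      using k by linarith
    ultimately have "r \<le> real k * real (l (W k)) / real (l n)"
      by linarith
    also have "real k * real (l (W k)) = (\<Sum>i. real i * real (l (W i)) * indicator (S i) (y n))"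
      by (rule suminf_mult_indicator[OF assms(3) n(2), symmetric])
    finally have "r \<le> (\<Sum>i. real i * real (l (W i)) * indicator (S i) (y n)) / real (l n)" .
    moreover have "n \<ge> N"
      using n(1) k by simp
    ultimately show "\<exists>n\<ge>N. r \<le> (\<Sum>k. real k * real (l (W k)) * indicator (S k) (y n)) / real (l n)"
      by blast
  qed
qed

theorem lemma3:
  fixes M :: "'a measure" and T :: "'a \<Rightarrow> 'a" and l :: "nat \<Rightarrow> nat"
  assumes "prob_space M"
    and "non_atomic M"
    and "invertible_mp_map M T"
    and "ergodic_map M T"
    and "strict_mono_on {1..} l"
    and "\<forall>n\<ge>1. 0 < l n"
  shows "\<exists>v :: 'a \<Rightarrow> real. v \<in> borel_measurable M \<and> (\<forall>x\<in>space M. 0 \<le> v x) \<and>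
           (AE x in M. limsup (\<lambda>n. ereal (v ((T ^^ n) x) / real (l n))) = \<infinity>)"
proof -
  interpret prob_space M by fact
  have mp: "measure_preserving_map M T"
    using assms(3) unfolding invertible_mp_map_def by simp
  obtain S :: "nat \<Rightarrow> 'a set"
    where disj: "disjoint_family S" and S: "\<And>k. S k \<in> sets M" "\<And>k. 0 < measure M (S k)"
    using non_atomic_disjoint_family[OF finite_measure assms(2)] by (auto simp: prob_space)
  have "\<exists>W. AE x in M. \<exists>\<^sub>F k in sequentially. \<exists>n\<in>{k..W k}. (T^^n) x \<in> S k"
    by (rule ergodic_AE_frequently_hits_windows[OF assms(1) mp assms(4)]) (fact S)+
  then obtain W where visits: "AE x in M. \<exists>\<^sub>F k in sequentially. \<exists>n\<in>{k..W k}. (T^^n) x \<in> S k"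
    by blast
  define v where "v x = (\<Sum>k. real k * real (l (W k)) * indicator (S k) x)" for x
  have "v \<in> borel_measurable M"
    unfolding v_def using S(1)
    by (intro borel_measurable_suminf borel_measurable_times borel_measurable_const borel_measurable_indicator)
  moreover have "0 \<le> v x" for x
    unfolding v_def using disj by (rule weighted_indicator_sum_nonneg) simp
  moreover have "AE x in M. limsup (\<lambda>n. ereal (v ((T ^^ n) x) / real (l n))) = \<infinity>"
    using visits unfolding v_def
    by eventually_elim (rule limsup_weighted_visits_eq_infinity[OF assms(5,6) disj])
  ultimately show ?thesis
    by blast
qed

end
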